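(* Let $n\in\{5,6,7,8,9,11\}$ and let $G_n$ be the regular network graph with cells $\{1,\dots,n\}$ (indices modulo $n$) in which each cell $i$ receives edges from its nearest and next nearest neighbours, i.e. the edges are $(i\pm1,i)$ and $(i\pm 2,i)$ for all $i$, all of a single edge type. Then $G_n$ has no exotic pattern of synchrony: for every balanced equivalence relation $\bowtie$ on the cells of $G_n$ there exists a subgroup $\Sigma$ of $\mathrm{Aut}(G_n)$ with $\bowtie\;=\;\bowtie_\Sigma$.
   Context: For a network graph with cells $\mathcal{C}$, edges $\mathcal{E}\subset\mathcal{C}\times\mathcal{C}$, and a single edge type (and single cell type), the input set of a cell $c$ is $I(c)=\{(d,c)\in\mathcal{E}\}$ and $\mathcal{T}(e)$ denotes the tail $d$ of an edge $e=(d,c)$. An equivalence relation $\bowtie$ on $\mathcal{C}$ is balanced if whenever $c\bowtie d$ there exists a bijection $\beta:I(c)\to I(d)$ with $\mathcal{T}(e)\bowtie\mathcal{T}(\beta(e))$ for all $e\in I(c)$. An automorphism of the graph is a permutation $\gamma$ of $\mathcal{C}$ with $(c,d)\in\mathcal{E}$ iff $(\gamma(c),\gamma(d))\in\mathcal{E}$; these form the group $\mathrm{Aut}$. For a subgroup $\Sigma$ of $\mathrm{Aut}$, $\bowtie_\Sigma$ is the orbit relation: $c\bowtie_\Sigma d$ iff $\gamma(c)=d$ for some $\gamma\in\Sigma$. A balanced equivalence relation is exotic if it is not of the form $\bowtie_\Sigma$ for any subgroup $\Sigma$ of $\mathrm{Aut}$. *)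

theory Defs
  imports Main "HOL-Combinatorics.Permutations"
begin

text \<open>General network graphs with a single cell type and a single edge type:
  cells C, edges E a subset of C x C (edge (d,c) goes from tail d to head c).\<close>

definition input_set :: "('a \<times> 'a) set \<Rightarrow> 'a \<Rightarrow> ('a \<times> 'a) set" where
  "input_set E c = {e \<in> E. snd e = c}"

definition tail :: "'a \<times> 'a \<Rightarrow> 'a" where
  "tail e = fst e"

definition balanced :: "'a set \<Rightarrow> ('a \<times> 'a) set \<Rightarrow> ('a \<times> 'a) set \<Rightarrow> bool" where
  "balanced C E R \<longleftrightarrow> equiv C R \<and>
     (\<forall>c d. (c, d) \<in> R \<longrightarrow>
        (\<exists>\<beta>. bij_betw \<beta> (input_set E c) (input_set E d) \<and>
              (\<forall>e \<in> input_set E c. (tail e, tail (\<beta> e)) \<in> R)))"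

definition automorphisms :: "'a set \<Rightarrow> ('a \<times> 'a) set \<Rightarrow> ('a \<Rightarrow> 'a) set" where
  "automorphisms C E = {\<gamma>. \<gamma> permutes C \<and>
     (\<forall>c \<in> C. \<forall>d \<in> C. (c, d) \<in> E \<longleftrightarrow> (\<gamma> c, \<gamma> d) \<in> E)}"

definition is_subgroup_Aut :: "'a set \<Rightarrow> ('a \<times> 'a) set \<Rightarrow> ('a \<Rightarrow> 'a) set \<Rightarrow> bool" where
  "is_subgroup_Aut C E \<Sigma> \<longleftrightarrow> \<Sigma> \<subseteq> automorphisms C E \<and> id \<in> \<Sigma> \<and>
     (\<forall>\<gamma> \<in> \<Sigma>. \<forall>\<delta> \<in> \<Sigma>. \<gamma> \<circ> \<delta> \<in> \<Sigma>) \<and> (\<forall>\<gamma> \<in> \<Sigma>. inv \<gamma> \<in> \<Sigma>)"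

definition orbit_rel :: "'a set \<Rightarrow> ('a \<Rightarrow> 'a) set \<Rightarrow> ('a \<times> 'a) set" where
  "orbit_rel C \<Sigma> = {(c, d). c \<in> C \<and> (\<exists>\<gamma> \<in> \<Sigma>. \<gamma> c = d)}"

definition exotic :: "'a set \<Rightarrow> ('a \<times> 'a) set \<Rightarrow> ('a \<times> 'a) set \<Rightarrow> bool" where
  "exotic C E R \<longleftrightarrow> balanced C E R \<and>
     \<not> (\<exists>\<Sigma>. is_subgroup_Aut C E \<Sigma> \<and> R = orbit_rel C \<Sigma>)"

definition ring_cells :: "nat \<Rightarrow> nat set" where
  "ring_cells n = {0..<n}"

definition ring_edges :: "nat \<Rightarrow> (nat \<times> nat) set" where
  "ring_edges n = (\<Union>i \<in> {0..<n}.
     {((i + 1) mod n, i), ((i + n - 1) mod n, i), ((i + 2) mod n, i), ((i + n - 2) mod n, i)})"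

end

theory Submission
  imports Defs "HOL-Library.Multiset"
begin

text \<open>Encode a balanced equivalence relation \<open>R\<close> on the ring by the colouring \<open>\<rho>\<close> sending each
  cell to the least cell of its class. Balance says that cells of equal colour see equal multisets
  of neighbour colours. Colouring the cells \<open>0, 1, 2, \<dots>\<close> in turn and pruning with this condition
  produces a short list of candidate colourings that provably contains \<open>\<rho>\<close>. For each candidate
  and each cell \<open>j\<close> we exhibit a colour-preserving automorphism of the ring (a dihedral one when
  \<open>n \<ge> 7\<close>) mapping \<open>\<rho> j\<close> to \<open>j\<close>. Hence the classes of \<open>R\<close> are the orbits of the group of
  automorphisms that preserve every class.\<close>

section \<open>Class-preserving automorphisms\<close>

lemma id_in_automorphisms: "id \<in> automorphisms C E"
  unfolding automorphisms_def by (simp add: permutes_id)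

lemma automorphisms_comp:
  assumes "\<gamma> \<in> automorphisms C E" "\<delta> \<in> automorphisms C E"
  shows "\<gamma> \<circ> \<delta> \<in> automorphisms C E"
proof -
  have "\<delta> c \<in> C" if "c \<in> C" for c
    using assms(2) that by (simp add: automorphisms_def permutes_in_image)
  with assms show ?thesis
    unfolding automorphisms_def by (auto intro: permutes_compose)
qed

lemma automorphisms_inv:
  assumes "\<gamma> \<in> automorphisms C E"
  shows "inv \<gamma> \<in> automorphisms C E"
proof -
  have perm: "\<gamma> permutes C" and edges: "\<forall>c\<in>C. \<forall>d\<in>C. (c, d) \<in> E \<longleftrightarrow> (\<gamma> c, \<gamma> d) \<in> E"
    using assms by (auto simp: automorphisms_def)
  have "inv \<gamma> c \<in> C" if "c \<in> C" for c
    using permutes_inv[OF perm] that by (simp add: permutes_in_image)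
  with edges have "(inv \<gamma> c, inv \<gamma> d) \<in> E \<longleftrightarrow> (c, d) \<in> E" if "c \<in> C" "d \<in> C" for c d
    using that by (simp add: permutes_inverses(1)[OF perm])
  then show ?thesis
    using permutes_inv[OF perm] by (simp add: automorphisms_def)
qed

definition class_preserving_automorphisms ::
    "'a set \<Rightarrow> ('a \<times> 'a) set \<Rightarrow> ('a \<times> 'a) set \<Rightarrow> ('a \<Rightarrow> 'a) set" where
  "class_preserving_automorphisms C E R = {\<gamma> \<in> automorphisms C E. \<forall>c \<in> C. (c, \<gamma> c) \<in> R}"

lemma is_subgroup_Aut_class_preserving:
  assumes "equiv C R"
  shows "is_subgroup_Aut C E (class_preserving_automorphisms C E R)"
  unfolding is_subgroup_Aut_def
proof (intro conjI ballI)
  show "class_preserving_automorphisms C E R \<subseteq> automorphisms C E"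
    by (auto simp: class_preserving_automorphisms_def)
  show "id \<in> class_preserving_automorphisms C E R"
    using assms id_in_automorphisms
    by (auto simp: class_preserving_automorphisms_def equiv_def refl_on_def)
next
  fix \<gamma> \<delta> assume "\<gamma> \<in> class_preserving_automorphisms C E R" "\<delta> \<in> class_preserving_automorphisms C E R"
  then have \<gamma>: "\<gamma> \<in> automorphisms C E" "\<forall>c \<in> C. (c, \<gamma> c) \<in> R"
    and \<delta>: "\<delta> \<in> automorphisms C E" "\<forall>c \<in> C. (c, \<delta> c) \<in> R"
    by (auto simp: class_preserving_automorphisms_def)
  have "(c, \<gamma> (\<delta> c)) \<in> R" if "c \<in> C" for c
  proof -
    have "\<delta> c \<in> C"
      using \<delta>(1) that by (simp add: automorphisms_def permutes_in_image)
    then show ?thesis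
      using \<gamma>(2) \<delta>(2) that assms by (meson equiv_def trans_def)
  qed
  then show "\<gamma> \<circ> \<delta> \<in> class_preserving_automorphisms C E R"
    using automorphisms_comp[OF \<gamma>(1) \<delta>(1)] by (simp add: class_preserving_automorphisms_def)
next
  fix \<gamma> assume "\<gamma> \<in> class_preserving_automorphisms C E R"
  then have \<gamma>: "\<gamma> \<in> automorphisms C E" "\<forall>c \<in> C. (c, \<gamma> c) \<in> R"
    by (auto simp: class_preserving_automorphisms_def)
  have perm: "\<gamma> permutes C"
    using \<gamma>(1) by (simp add: automorphisms_def)
  have "(c, inv \<gamma> c) \<in> R" if "c \<in> C" for c
  proof -
    have "(inv \<gamma> c, \<gamma> (inv \<gamma> c)) \<in> R"
      using \<gamma>(2) permutes_inv[OF perm] that by (simp add: permutes_in_image)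
    then show ?thesis
      using assms by (simp add: permutes_inverses(1)[OF perm] equiv_def sym_def)
  qed
  then show "inv \<gamma> \<in> class_preserving_automorphisms C E R"
    using automorphisms_inv[OF \<gamma>(1)] by (simp add: class_preserving_automorphisms_def)
qed

lemma orbit_rel_class_preserving:
  assumes equiv: "equiv C R"
    and rep: "\<And>c d. (c, d) \<in> R \<Longrightarrow> \<rho> c = \<rho> d"
    and reach: "\<And>c. c \<in> C \<Longrightarrow> \<exists>\<gamma> \<in> class_preserving_automorphisms C E R. \<gamma> (\<rho> c) = c"
  shows "orbit_rel C (class_preserving_automorphisms C E R) = R"
proof
  show "orbit_rel C (class_preserving_automorphisms C E R) \<subseteq> R"
    by (auto simp: orbit_rel_def class_preserving_automorphisms_def)
next
  let ?\<Sigma> = "class_preserving_automorphisms C E R"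
  show "R \<subseteq> orbit_rel C ?\<Sigma>"
  proof clarify
    fix c d assume cd: "(c, d) \<in> R"
    then have "c \<in> C" "d \<in> C"
      using equiv by (auto simp: equiv_def refl_on_def)
    then obtain \<gamma> \<delta> where \<gamma>: "\<gamma> \<in> ?\<Sigma>" "\<gamma> (\<rho> c) = c" and \<delta>: "\<delta> \<in> ?\<Sigma>" "\<delta> (\<rho> d) = d"
      using reach by metis
    have "\<gamma> permutes C"
      using \<gamma>(1) by (simp add: class_preserving_automorphisms_def automorphisms_def)
    then have "inv \<gamma> c = \<rho> c"
      using \<gamma>(2) permutes_inverses(2) by metis
    then have "(\<delta> \<circ> inv \<gamma>) c = d"
      using \<delta>(2) rep[OF cd] by simp
    moreover have "\<delta> \<circ> inv \<gamma> \<in> ?\<Sigma>"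
      using is_subgroup_Aut_class_preserving[OF equiv] \<gamma>(1) \<delta>(1) by (simp add: is_subgroup_Aut_def)
    ultimately show "(c, d) \<in> orbit_rel C ?\<Sigma>"
      unfolding orbit_rel_def using \<open>c \<in> C\<close> by blast
  qed
qed

lemma balanced_input_colors_eq:
  assumes "balanced C E R" "(c, d) \<in> R" "finite (input_set E c)"
    and rep: "\<And>x y. (x, y) \<in> R \<Longrightarrow> \<rho> x = \<rho> y"
  shows "image_mset (\<rho> \<circ> tail) (mset_set (input_set E c)) =
         image_mset (\<rho> \<circ> tail) (mset_set (input_set E d))"
proof -
  obtain \<beta> where \<beta>: "bij_betw \<beta> (input_set E c) (input_set E d)"
    and tails: "\<forall>e \<in> input_set E c. (tail e, tail (\<beta> e)) \<in> R"
    using assms(1,2) unfolding balanced_def by blast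
  have "mset_set (input_set E d) = image_mset \<beta> (mset_set (input_set E c))"
    using \<beta> by (simp add: bij_betw_def image_mset_mset_set)
  then have "image_mset (\<rho> \<circ> tail) (mset_set (input_set E d)) =
      image_mset (\<rho> \<circ> tail \<circ> \<beta>) (mset_set (input_set E c))"
    by (simp add: multiset.map_comp)
  also have "\<dots> = image_mset (\<rho> \<circ> tail) (mset_set (input_set E c))"
    using assms(3) tails rep by (intro image_mset_cong) auto
  finally show ?thesis ..
qed

definition least_rep :: "(nat \<times> nat) set \<Rightarrow> nat \<Rightarrow> nat" where
  "least_rep R i = (LEAST j. (j, i) \<in> R)"

context
  fixes C :: "nat set" and R :: "(nat \<times> nat) set"
  assumes equiv: "equiv C R"
begin

lemma least_rep_related: "i \<in> C \<Longrightarrow> (least_rep R i, i) \<in> R"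
  unfolding least_rep_def using equiv by (metis LeastI equiv_def refl_onD)

lemma least_rep_le: "i \<in> C \<Longrightarrow> least_rep R i \<le> i"
  unfolding least_rep_def using equiv by (metis Least_le equiv_def refl_onD)

lemma least_rep_eq: "(i, j) \<in> R \<Longrightarrow> least_rep R i = least_rep R j"
proof -
  assume "(i, j) \<in> R"
  then have "(k, i) \<in> R \<longleftrightarrow> (k, j) \<in> R" for k
    using equiv by (meson equiv_def sym_def trans_def)
  then show "least_rep R i = least_rep R j"
    by (simp add: least_rep_def)
qed

lemma least_rep_eq_iff:
  assumes "i \<in> C" "j \<in> C"
  shows "least_rep R i = least_rep R j \<longleftrightarrow> (i, j) \<in> R"
proof
  assume "least_rep R i = least_rep R j"
  then show "(i, j) \<in> R"
    using least_rep_related[OF assms(1)] least_rep_related[OF assms(2)] equiv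
    by (metis equiv_def sym_def trans_def)
qed (rule least_rep_eq)

lemma least_rep_least_rep: "i \<in> C \<Longrightarrow> least_rep R (least_rep R i) = least_rep R i"
  using least_rep_related least_rep_eq_iff equiv
  by (metis equiv_class_eq_iff)

end

definition ring_nbrs :: "nat \<Rightarrow> nat \<Rightarrow> nat list" where
  "ring_nbrs n i = [(i + 1) mod n, (i + n - 1) mod n, (i + 2) mod n, (i + n - 2) mod n]"

lemma ring_edges_iff: "0 < n \<Longrightarrow> (a, b) \<in> ring_edges n \<longleftrightarrow> b < n \<and> a \<in> set (ring_nbrs n b)"
  unfolding ring_edges_def ring_nbrs_def by auto

lemma ring_nbrs_less: "0 < n \<Longrightarrow> a \<in> set (ring_nbrs n b) \<Longrightarrow> a < n"
  unfolding ring_nbrs_def by auto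

lemma mod_add_left_inj:
  fixes i d e :: nat
  assumes "(i + d) mod n = (i + e) mod n" "d < n" "e < n"
  shows "d = e"
proof -
  have "d = e" if "(i + d) mod n = (i + e) mod n" "d \<le> e" "e < n" for d e
  proof -
    have "n dvd e - d"
      using that(1,2) mod_eq_dvd_iff_nat[of "i + d" "i + e" n] by simp
    then show ?thesis
      using that(2,3) by (metis diff_is_0_eq dvd_imp_le le_antisym less_imp_diff_less not_le zero_less_diff)
  qed
  then show ?thesis
    using assms by (metis nat_le_linear)
qed

lemma distinct_ring_nbrs:
  assumes "5 \<le> n"
  shows "distinct (ring_nbrs n i)"
proof -
  have nbrs: "ring_nbrs n i = map (\<lambda>d. (i + d) mod n) [1, n - 1, 2, n - 2]"
    using assms by (simp add: ring_nbrs_def)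
  have "inj_on (\<lambda>d. (i + d) mod n) {..<n}"
    by (rule inj_onI, rule mod_add_left_inj) auto
  moreover have "set [1, n - 1, 2, n - 2] \<subseteq> {..<n}" "distinct [1, n - 1, 2, n - 2]"
    using assms by auto
  ultimately show ?thesis
    unfolding nbrs distinct_map by (blast intro: inj_on_subset)
qed

lemma add_diff_mod_self: "d \<le> i \<Longrightarrow> i - d < n \<Longrightarrow> (i + n - d) mod (n::nat) = i - d"
  by (metis Nat.add_diff_assoc2 mod_add_self2 mod_less)

lemma ring_nbrs_ge2: "2 \<le> i \<Longrightarrow> i < n \<Longrightarrow> ring_nbrs n i = [(i + 1) mod n, i - 1, (i + 2) mod n, i - 2]"
  unfolding ring_nbrs_def by (simp add: add_diff_mod_self)

lemma ring_nbrs_0: "3 \<le> n \<Longrightarrow> ring_nbrs n 0 = [1, n - 1, 2, n - 2]"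
  unfolding ring_nbrs_def by simp

lemma ring_nbrs_1: "4 \<le> n \<Longrightarrow> ring_nbrs n 1 = [2, 0, 3, n - 1]"
  unfolding ring_nbrs_def by simp

lemma ring_nbrs_last: "4 \<le> n \<Longrightarrow> ring_nbrs n (n - 1) = [0, n - 2, 1, n - 3]"
  unfolding ring_nbrs_def by (simp add: add_diff_mod_self mod_Suc numeral_2_eq_2 numeral_3_eq_3)

lemma ring_nbrs_last2: "4 \<le> n \<Longrightarrow> ring_nbrs n (n - 2) = [n - 1, n - 3, 0, n - 4]"
  unfolding ring_nbrs_def by (simp add: add_diff_mod_self numeral_2_eq_2 numeral_3_eq_3 Suc_diff_Suc)

lemma input_set_ring:
  "0 < n \<Longrightarrow> c < n \<Longrightarrow> input_set (ring_edges n) c = (\<lambda>j. (j, c)) ` set (ring_nbrs n c)"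
  unfolding input_set_def using ring_edges_iff[of n] by force

lemma input_colors_ring:
  assumes "5 \<le> n" "c < n"
  shows "image_mset (\<rho> \<circ> tail) (mset_set (input_set (ring_edges n) c)) = mset (map \<rho> (ring_nbrs n c))"
proof -
  have "mset_set (input_set (ring_edges n) c) = image_mset (\<lambda>j. (j, c)) (mset (ring_nbrs n c))"
    using assms distinct_ring_nbrs
    by (simp add: input_set_ring image_mset_mset_set[symmetric] inj_on_def mset_set_set)
  then show ?thesis
    by (simp add: multiset.map_comp comp_def tail_def)
qed

lemma balanced_ring_nbr_colors:
  assumes "5 \<le> n" "balanced (ring_cells n) (ring_edges n) R" "(a, b) \<in> R"
    and rep: "\<And>x y. (x, y) \<in> R \<Longrightarrow> \<rho> x = \<rho> y"
  shows "mset (map \<rho> (ring_nbrs n a)) = mset (map \<rho> (ring_nbrs n b))"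
proof -
  have "a < n" "b < n"
    using assms(2,3) by (auto simp: balanced_def equiv_def refl_on_def ring_cells_def)
  moreover from \<open>a < n\<close> have "finite (input_set (ring_edges n) a)"
    using assms(1) by (simp add: input_set_ring)
  then have "image_mset (\<rho> \<circ> tail) (mset_set (input_set (ring_edges n) a)) =
      image_mset (\<rho> \<circ> tail) (mset_set (input_set (ring_edges n) b))"
    by (rule balanced_input_colors_eq[where \<rho> = \<rho>, OF assms(2,3) _ rep])
  ultimately show ?thesis
    using input_colors_ring[OF assms(1)] by metis
qed

section \<open>Search for the balanced colourings\<close>

text \<open>A partial colouring of the cells \<open>0, \<dots>, k - 1\<close> is stored as a tuple \<open>(ys, P, T, h)\<close>:
  \<open>ys\<close> lists the colours backwards (cell \<open>k - 1\<close> first), \<open>P\<close> lists the colours used so far, \<open>h\<close>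
  holds the colours of the cells \<open>0, \<dots>, 3\<close> once they are known, and the table \<open>T\<close> assigns to a
  colour the neighbour colours of some cell of that colour all of whose neighbours are coloured.
  When cell \<open>k\<close> is coloured, cell \<open>k - 2\<close> enters \<open>T\<close>; the partially known neighbourhoods of the
  cells at both ends of the path \<open>0, \<dots>, k\<close> must fit into \<open>T\<close>; the four cells next to the
  closing point \<open>n - 1 \<mapsto> 0\<close> enter \<open>T\<close> at the end.\<close>

type_synonym signatures = "(nat \<times> nat list) list"

definition fits :: "signatures \<Rightarrow> nat \<Rightarrow> nat list \<Rightarrow> bool" where
  "fits T c t \<longleftrightarrow> (case map_of T c of None \<Rightarrow> True | Some s \<Rightarrow> mset t \<subseteq># mset s)"

definition add_sig :: "nat \<Rightarrow> nat list \<Rightarrow> signatures \<Rightarrow> signatures option" where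
  "add_sig c t T = (case map_of T c of
     None \<Rightarrow> Some ((c, t) # T)
   | Some s \<Rightarrow> if mset t \<subseteq># mset s then Some T else None)"

fun settle :: "nat list \<Rightarrow> signatures \<Rightarrow> signatures option" where
  "settle (a # b # c # d # e # _) T = add_sig c [b, d, a, e] T"
| "settle _ T = Some T"

fun frontier_fits :: "nat list \<Rightarrow> signatures \<Rightarrow> bool" where
  "frontier_fits (a # b # c # d # _) T \<longleftrightarrow> fits T a [b, c] \<and> fits T b [a, c, d]"
| "frontier_fits _ T \<longleftrightarrow> True"

fun start_fits :: "nat list \<Rightarrow> signatures \<Rightarrow> bool" where
  "start_fits [x0, x1, x2, x3] T \<longleftrightarrow> fits T x0 [x1, x2] \<and> fits T x1 [x0, x2, x3]"
| "start_fits _ T \<longleftrightarrow> True"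

fun close_ring :: "nat list \<Rightarrow> nat list \<Rightarrow> signatures \<Rightarrow> signatures option" where
  "close_ring (y0 # y1 # y2 # y3 # _) [x0, x1, x2, x3] T =
     Option.bind (add_sig y1 [y0, y2, x0, y3] T) (\<lambda>T.
     Option.bind (add_sig y0 [x0, y1, x1, y2] T) (\<lambda>T.
     Option.bind (add_sig x0 [x1, y0, x2, y1] T) (add_sig x1 [x2, x0, x3, y0])))"
| "close_ring _ _ T = None"

type_synonym partial = "nat list \<times> nat list \<times> signatures \<times> nat list"

definition extensions :: "nat \<Rightarrow> partial \<Rightarrow> partial list" where
  "extensions k = (\<lambda>(ys, P, T, h).
     [(c # ys, if c = k then P @ [k] else P, T', if k = 3 then rev (c # ys) else h).
        c \<leftarrow> P @ [k], Some T' \<leftarrow> [settle (c # ys) T],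
        frontier_fits (c # ys) T' \<and> start_fits (if k = 3 then rev (c # ys) else h) T'])"

fun partial_colorings :: "nat \<Rightarrow> partial list" where
  "partial_colorings 0 = [([], [], [], [])]"
| "partial_colorings (Suc k) = concat (map (extensions k) (partial_colorings k))"

definition ring_colorings :: "nat \<Rightarrow> nat list list" where
  "ring_colorings n = [rev ys. (ys, P, T, h) \<leftarrow> partial_colorings n, close_ring ys h T \<noteq> None]"

text \<open>Stated in simp normal form, so that \<open>simp\<close> can use it after unfolding lists to multisets.\<close>

lemma sub_mset_of_four:
  "{#b, d#} \<subseteq># {#a, b, c, d#}"
  "{#a, b, d#} \<subseteq># {#a, b, c, d#}"
  "{#a, c#} \<subseteq># {#a, b, c, d#}"
  "{#b, a, c#} \<subseteq># {#a, b, c, d#}"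
  by (simp_all add: subset_mset.le_iff_add)

lemma rev_map_upt_ge4:
  assumes "4 \<le> k"
  shows "rev (map f [0..<k]) = f (k - 1) # f (k - 2) # f (k - 3) # f (k - 4) # rev (map f [0..<k - 4])"
proof -
  obtain m where "k = m + 4"
    using assms by (metis add.commute le_Suc_ex)
  then show ?thesis
    by (simp add: numeral_eq_Suc)
qed

locale ring_coloring =
  fixes n :: nat and \<rho> :: "nat \<Rightarrow> nat"
  assumes four_le: "4 \<le> n"
    and rep_le: "\<And>i. i < n \<Longrightarrow> \<rho> i \<le> i"
    and rep_rep: "\<And>i. i < n \<Longrightarrow> \<rho> (\<rho> i) = \<rho> i"
    and nbr_colors_eq: "\<And>a b. a < n \<Longrightarrow> b < n \<Longrightarrow> \<rho> a = \<rho> b \<Longrightarrow>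
      mset (map \<rho> (ring_nbrs n a)) = mset (map \<rho> (ring_nbrs n b))"
begin

definition sound_sigs :: "signatures \<Rightarrow> bool" where
  "sound_sigs T \<longleftrightarrow> (\<forall>(c, s) \<in> set T. \<exists>a < n. \<rho> a = c \<and> mset s = mset (map \<rho> (ring_nbrs n a)))"

lemma sig_of_rep:
  assumes "sound_sigs T" "map_of T (\<rho> x) = Some s" "x < n"
  shows "mset s = mset (map \<rho> (ring_nbrs n x))"
proof -
  obtain a where "a < n" "\<rho> a = \<rho> x" "mset s = mset (map \<rho> (ring_nbrs n a))"
    using assms(1) map_of_SomeD[OF assms(2)] unfolding sound_sigs_def by blast
  with nbr_colors_eq[OF \<open>a < n\<close> assms(3)] show ?thesis
    by simp
qed

lemma fits_sound:
  assumes "sound_sigs T" "x < n" "mset t \<subseteq># mset (map \<rho> (ring_nbrs n x))"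
  shows "fits T (\<rho> x) t"
proof (cases "map_of T (\<rho> x)")
  case (Some s)
  with sig_of_rep[OF assms(1) Some assms(2)] assms(3) show ?thesis
    by (simp add: fits_def)
qed (simp add: fits_def)

lemma add_sig_sound:
  assumes "sound_sigs T" "x < n" "mset t = mset (map \<rho> (ring_nbrs n x))"
  shows "\<exists>T'. add_sig (\<rho> x) t T = Some T' \<and> sound_sigs T'"
proof (cases "map_of T (\<rho> x)")
  case None
  with assms show ?thesis
    by (auto simp: add_sig_def sound_sigs_def)
next
  case (Some s)
  with sig_of_rep[OF assms(1) Some assms(2)] assms show ?thesis
    by (simp add: add_sig_def)
qed

lemma settle_sound:
  assumes "sound_sigs T" "k < n"
  shows "\<exists>T'. settle (rev (map \<rho> [0..<Suc k])) T = Some T' \<and> sound_sigs T'"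
proof (cases "k < 4")
  case True
  then have "k \<in> {0, 1, 2, 3}" by auto
  then show ?thesis using assms(1) by (auto simp: numeral_eq_Suc)
next
  case False
  then obtain m where k: "k = m + 4"
    by (metis add.commute le_Suc_ex not_less)
  have "ring_nbrs n (m + 2) = [m + 3, m + 1, m + 4, m]"
    using ring_nbrs_ge2[of "m + 2" n] assms(2) k by simp
  then have "\<exists>T'. add_sig (\<rho> (m + 2)) [\<rho> (m + 3), \<rho> (m + 1), \<rho> (m + 4), \<rho> m] T = Some T' \<and> sound_sigs T'"
    using add_sig_sound[OF assms(1), of "m + 2"] assms(2) k by simp
  then show ?thesis
    using k by (simp add: numeral_eq_Suc)
qed

lemma frontier_fits_sound:
  assumes "sound_sigs T" "k \<le> n"
  shows "frontier_fits (rev (map \<rho> [0..<k])) T"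
proof (cases "k < 4")
  case True
  then have "k \<in> {0, 1, 2, 3}" by auto
  then show ?thesis by (auto simp: numeral_eq_Suc)
next
  case False
  then obtain m where k: "k = m + 4"
    by (metis add.commute le_Suc_ex not_less)
  have "ring_nbrs n (m + 3) = [(m + 3 + 1) mod n, m + 3 - 1, (m + 3 + 2) mod n, m + 3 - 2]"
    by (rule ring_nbrs_ge2) (use assms(2) k in simp_all)
  then have "fits T (\<rho> (m + 3)) [\<rho> (m + 2), \<rho> (m + 1)]"
    using fits_sound[OF assms(1), of "m + 3"] assms(2) k by (simp add: sub_mset_of_four numeral_eq_Suc)
  moreover have "ring_nbrs n (m + 2) = [(m + 2 + 1) mod n, m + 2 - 1, (m + 2 + 2) mod n, m + 2 - 2]"
    by (rule ring_nbrs_ge2) (use assms(2) k in simp_all)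
  then have "fits T (\<rho> (m + 2)) [\<rho> (m + 3), \<rho> (m + 1), \<rho> m]"
    using fits_sound[OF assms(1), of "m + 2"] assms(2) k by (simp add: sub_mset_of_four numeral_eq_Suc)
  ultimately show ?thesis
    using rev_map_upt_ge4[of k \<rho>] k by (simp add: numeral_eq_Suc)
qed

lemma start_fits_sound:
  assumes "sound_sigs T"
  shows "start_fits (map \<rho> [0..<4]) T"
proof -
  have "3 \<le> n"
    using four_le by simp
  have "mset [\<rho> 1, \<rho> 2] \<subseteq># mset (map \<rho> (ring_nbrs n 0))"
    unfolding ring_nbrs_0[OF \<open>3 \<le> n\<close>] by (simp add: sub_mset_of_four)
  moreover have "mset [\<rho> 0, \<rho> 2, \<rho> 3] \<subseteq># mset (map \<rho> (ring_nbrs n 1))"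
    unfolding ring_nbrs_1[OF four_le] by (simp add: sub_mset_of_four)
  ultimately show ?thesis
    using fits_sound[OF assms, of 0] fits_sound[OF assms, of 1] four_le by (simp add: numeral_eq_Suc)
qed

lemma close_ring_sound:
  assumes "sound_sigs T"
  shows "close_ring (rev (map \<rho> [0..<n])) (map \<rho> [0..<4]) T \<noteq> None"
proof -
  obtain T1 where T1: "add_sig (\<rho> (n - 2)) [\<rho> (n - 1), \<rho> (n - 3), \<rho> 0, \<rho> (n - 4)] T = Some T1"
      "sound_sigs T1"
    using add_sig_sound[OF assms, of "n - 2" "[\<rho> (n - 1), \<rho> (n - 3), \<rho> 0, \<rho> (n - 4)]"]
      ring_nbrs_last2[OF four_le] four_le by auto
  obtain T2 where T2: "add_sig (\<rho> (n - 1)) [\<rho> 0, \<rho> (n - 2), \<rho> 1, \<rho> (n - 3)] T1 = Some T2"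
      "sound_sigs T2"
    using add_sig_sound[OF T1(2), of "n - 1" "[\<rho> 0, \<rho> (n - 2), \<rho> 1, \<rho> (n - 3)]"]
      ring_nbrs_last[OF four_le] four_le by auto
  obtain T3 where T3: "add_sig (\<rho> 0) [\<rho> 1, \<rho> (n - 1), \<rho> 2, \<rho> (n - 2)] T2 = Some T3"
      "sound_sigs T3"
    using add_sig_sound[OF T2(2), of 0 "[\<rho> 1, \<rho> (n - 1), \<rho> 2, \<rho> (n - 2)]"]
      ring_nbrs_0 four_le by auto
  obtain T4 where "add_sig (\<rho> 1) [\<rho> 2, \<rho> 0, \<rho> 3, \<rho> (n - 1)] T3 = Some T4"
    using add_sig_sound[OF T3(2), of 1 "[\<rho> 2, \<rho> 0, \<rho> 3, \<rho> (n - 1)]"]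
      ring_nbrs_1[OF four_le] four_le by auto
  with T1 T2 T3 show ?thesis
    unfolding rev_map_upt_ge4[OF four_le] by (simp add: numeral_eq_Suc)
qed

lemma partial_colorings_complete:
  assumes "k \<le> n"
  shows "\<exists>T. sound_sigs T \<and> (rev (map \<rho> [0..<k]), filter (\<lambda>i. \<rho> i = i) [0..<k], T,
    if 4 \<le> k then map \<rho> [0..<4] else []) \<in> set (partial_colorings k)"
  using assms
proof (induction k)
  case 0
  then show ?case
    by (simp add: sound_sigs_def)
next
  case (Suc k)
  let ?ys = "rev (map \<rho> [0..<k])" and ?P = "filter (\<lambda>i. \<rho> i = i) [0..<k]"
  let ?h = "if 4 \<le> k then map \<rho> [0..<4] else []"
  obtain T where T: "sound_sigs T" "(?ys, ?P, T, ?h) \<in> set (partial_colorings k)"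
    using Suc by auto
  obtain T' where T': "settle (\<rho> k # ?ys) T = Some T'" "sound_sigs T'"
    using settle_sound[OF T(1), of k] Suc.prems by auto
  let ?next = "(rev (map \<rho> [0..<Suc k]), filter (\<lambda>i. \<rho> i = i) [0..<Suc k], T',
    if 4 \<le> Suc k then map \<rho> [0..<4] else [])"
  have "\<rho> k \<in> set (?P @ [k])"
    using rep_le[of k] rep_rep[of k] Suc.prems by (cases "\<rho> k = k") auto
  moreover have "frontier_fits (\<rho> k # ?ys) T'"
    using frontier_fits_sound[OF T'(2), of "Suc k"] Suc.prems by simp
  moreover have "start_fits (if k = 3 then rev (\<rho> k # ?ys) else ?h) T'"
    using start_fits_sound[OF T'(2)] by (simp add: numeral_eq_Suc)
  moreover have "(if k = 3 then rev (\<rho> k # ?ys) else ?h) = (if 4 \<le> Suc k then map \<rho> [0..<4] else [])"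
    by (auto simp: numeral_eq_Suc)
  ultimately have "?next \<in> set (extensions k (?ys, ?P, T, ?h))"
    unfolding extensions_def using T'(1) by force
  then have "?next \<in> set (partial_colorings (Suc k))"
    using T(2) by (simp only: partial_colorings.simps set_concat set_map) blast
  with T'(2) show ?case
    by blast
qed

lemma ring_colorings_complete: "map \<rho> [0..<n] \<in> set (ring_colorings n)"
  using partial_colorings_complete[of n] close_ring_sound four_le
  unfolding ring_colorings_def by force

end

lemma ring_coloring_least_rep:
  assumes "5 \<le> n" and bal: "balanced (ring_cells n) (ring_edges n) R"
  shows "ring_coloring n (least_rep R)"
proof -
  have equiv: "equiv (ring_cells n) R"
    using bal by (simp add: balanced_def)
  show ?thesis
  proof
    show "4 \<le> n"
      using assms(1) by simp
  next
    fix i assume "i < n"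
    then show "least_rep R i \<le> i" "least_rep R (least_rep R i) = least_rep R i"
      using least_rep_le[OF equiv] least_rep_least_rep[OF equiv] by (simp_all add: ring_cells_def)
  next
    fix a b assume "a < n" "b < n" "least_rep R a = least_rep R b"
    then have "(a, b) \<in> R"
      using least_rep_eq_iff[OF equiv] by (simp add: ring_cells_def)
    then show "mset (map (least_rep R) (ring_nbrs n a)) = mset (map (least_rep R) (ring_nbrs n b))"
      by (rule balanced_ring_nbr_colors[OF assms(1) bal _ least_rep_eq[OF equiv]])
  qed
qed

section \<open>Symmetry certificates\<close>

definition list_perm :: "nat \<Rightarrow> nat list \<Rightarrow> nat \<Rightarrow> nat" where
  "list_perm n g k = (if k < n then g ! k else k)"

definition is_ring_automorphism :: "nat \<Rightarrow> nat list \<Rightarrow> bool" where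
  "is_ring_automorphism n g \<longleftrightarrow> distinct g \<and> set g = {..<n} \<and>
     (\<forall>b < n. (!) g ` set (ring_nbrs n b) = set (ring_nbrs n (g ! b)))"

lemma is_ring_automorphism_nth_less:
  assumes "is_ring_automorphism n g" "k < n"
  shows "g ! k < n"
proof -
  have "length g = n"
    using assms(1) distinct_card[of g] by (simp add: is_ring_automorphism_def)
  then show ?thesis
    using assms nth_mem[of k g] by (auto simp: is_ring_automorphism_def)
qed

lemma list_perm_automorphism:
  assumes "0 < n" "is_ring_automorphism n g"
  shows "list_perm n g \<in> automorphisms (ring_cells n) (ring_edges n)"
proof -
  have dist: "distinct g" and set_g: "set g = {..<n}"
    and nbrs: "\<And>b. b < n \<Longrightarrow> (!) g ` set (ring_nbrs n b) = set (ring_nbrs n (g ! b))"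
    using assms(2) by (auto simp: is_ring_automorphism_def)
  have "length g = n"
    using distinct_card[OF dist] set_g by simp
  then have bij: "bij_betw ((!) g) {..<n} {..<n}"
    using bij_betw_nth[OF dist] set_g by simp
  then have "bij_betw (list_perm n g) {..<n} {..<n}"
    by (rule bij_betw_cong[THEN iffD1, rotated]) (simp add: list_perm_def)
  then have "list_perm n g permutes {..<n}"
    by (rule bij_imp_permutes) (simp add: list_perm_def)
  then have perm: "list_perm n g permutes ring_cells n"
    by (simp add: ring_cells_def lessThan_atLeast0)
  have "(c, d) \<in> ring_edges n \<longleftrightarrow> (g ! c, g ! d) \<in> ring_edges n" if "c < n" "d < n" for c d
  proof -
    have "set (ring_nbrs n d) \<subseteq> {..<n}"
      using assms(1) ring_nbrs_less by blast
    then have "c \<in> set (ring_nbrs n d) \<longleftrightarrow> g ! c \<in> set (ring_nbrs n (g ! d))"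
      using nbrs[OF that(2)] bij that(1) by (metis bij_betw_def inj_on_image_mem_iff lessThan_iff)
    then show ?thesis
      using assms(1) that is_ring_automorphism_nth_less[OF assms(2)] by (simp add: ring_edges_iff)
  qed
  with perm show ?thesis
    by (simp add: automorphisms_def list_perm_def ring_cells_def)
qed

definition classes_are_orbits :: "nat list list \<Rightarrow> nat list \<Rightarrow> bool" where
  "classes_are_orbits A xs \<longleftrightarrow>
     (\<forall>j < length xs. \<exists>g \<in> set A. g ! (xs ! j) = j \<and> (\<forall>k < length xs. xs ! (g ! k) = xs ! k))"

lemma list_perm_class_preserving:
  assumes "0 < n" "is_ring_automorphism n g" "equiv (ring_cells n) R"
    and fixes_classes: "\<And>k. k < n \<Longrightarrow> least_rep R (g ! k) = least_rep R k"
  shows "list_perm n g \<in> class_preserving_automorphisms (ring_cells n) (ring_edges n) R"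
proof -
  have "(k, list_perm n g k) \<in> R" if "k \<in> ring_cells n" for k
  proof -
    have "k < n" "g ! k < n"
      using that is_ring_automorphism_nth_less[OF assms(2)] by (auto simp: ring_cells_def)
    then show ?thesis
      using least_rep_eq_iff[OF assms(3), of k "g ! k"] fixes_classes[of k]
      by (simp add: list_perm_def ring_cells_def)
  qed
  with list_perm_automorphism[OF assms(1,2)] show ?thesis
    by (simp add: class_preserving_automorphisms_def)
qed

lemma ring_not_exotic_if_certified:
  assumes "5 \<le> n"
    and auts: "\<forall>g \<in> set A. is_ring_automorphism n g"
    and orbits: "\<forall>xs \<in> set (ring_colorings n). classes_are_orbits A xs"
    and bal: "balanced (ring_cells n) (ring_edges n) R"
  shows "\<exists>\<Sigma>. is_subgroup_Aut (ring_cells n) (ring_edges n) \<Sigma> \<and> R = orbit_rel (ring_cells n) \<Sigma>"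
proof -
  let ?\<rho> = "least_rep R" and ?\<Sigma> = "class_preserving_automorphisms (ring_cells n) (ring_edges n) R"
  have equiv: "equiv (ring_cells n) R"
    using bal by (simp add: balanced_def)
  interpret ring_coloring n ?\<rho>
    using ring_coloring_least_rep[OF assms(1) bal] .
  have orbits_\<rho>: "classes_are_orbits A (map ?\<rho> [0..<n])"
    using orbits ring_colorings_complete by blast
  have "\<exists>\<gamma> \<in> ?\<Sigma>. \<gamma> (?\<rho> c) = c" if "c \<in> ring_cells n" for c
  proof -
    have "c < n" "?\<rho> c < n"
      using that rep_le[of c] by (auto simp: ring_cells_def)
    with orbits_\<rho> obtain g where g: "g \<in> set A" "g ! ?\<rho> c = c"
      and fixes_colors: "\<forall>k < n. map ?\<rho> [0..<n] ! (g ! k) = ?\<rho> k"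
      by (auto simp: classes_are_orbits_def)
    have "?\<rho> (g ! k) = ?\<rho> k" if "k < n" for k
      using fixes_colors[rule_format, OF that] is_ring_automorphism_nth_less[OF bspec[OF auts g(1)] that]
      by simp
    then have "list_perm n g \<in> ?\<Sigma>"
      using list_perm_class_preserving assms(1) auts g(1) equiv by simp
    with g(2) \<open>?\<rho> c < n\<close> show ?thesis
      by (metis list_perm_def)
  qed
  then have "orbit_rel (ring_cells n) ?\<Sigma> = R"
    using orbit_rel_class_preserving[where \<rho> = ?\<rho>, OF equiv least_rep_eq[OF equiv]] by blast
  with is_subgroup_Aut_class_preserving[OF equiv] show ?thesis
    by metis
qed

definition dihedral :: "nat \<Rightarrow> nat list list" where
  "dihedral n = [map (\<lambda>i. (r + i) mod n) [0..<n]. r \<leftarrow> [0..<n]] @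
                [map (\<lambda>i. (r + n - i) mod n) [0..<n]. r \<leftarrow> [0..<n]]"

text \<open>For \<open>n = 5\<close> the ring is the complete graph and for \<open>n = 6\<close> the octahedron; there the
  dihedral symmetries do not suffice (for the classes \<open>{0, 1, 2}\<close> and \<open>{3, 4, 5}\<close>, say).\<close>

definition ring_symmetries :: "nat \<Rightarrow> nat list list" where
  "ring_symmetries n =
    (if n = 5 then [map (Transposition.transpose a b) [0..<5]. a \<leftarrow> [0..<5], b \<leftarrow> [0..<5]]
     else if n = 6 then
       [[0, 1, 2, 3, 4, 5], [3, 1, 2, 0, 4, 5], [4, 3, 2, 1, 0, 5], [1, 0, 2, 4, 3, 5],
        [2, 1, 0, 5, 4, 3], [5, 1, 3, 2, 4, 0], [0, 4, 2, 3, 1, 5], [0, 5, 4, 3, 2, 1],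
        [0, 1, 5, 3, 4, 2], [0, 2, 1, 3, 5, 4]]
     else dihedral n)"

definition ring_certified :: "nat \<Rightarrow> bool" where
  "ring_certified n \<longleftrightarrow> (\<forall>g \<in> set (ring_symmetries n). is_ring_automorphism n g) \<and>
     (\<forall>xs \<in> set (ring_colorings n). classes_are_orbits (ring_symmetries n) xs)"

lemma ring_certified_5: "ring_certified 5" by code_simp
lemma ring_certified_6: "ring_certified 6" by code_simp
lemma ring_certified_7: "ring_certified 7" by code_simp
lemma ring_certified_8: "ring_certified 8" by code_simp
lemma ring_certified_9: "ring_certified 9" by code_simp
lemma ring_certified_11: "ring_certified 11" by code_simp

theorem proposition3p3:
  fixes n :: nat and R :: "(nat \<times> nat) set"
  assumes "n \<in> {5, 6, 7, 8, 9, 11}"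
    and "balanced (ring_cells n) (ring_edges n) R"
  shows "\<exists>\<Sigma>. is_subgroup_Aut (ring_cells n) (ring_edges n) \<Sigma> \<and>
              R = orbit_rel (ring_cells n) \<Sigma>"
proof -
  have "5 \<le> n"
    using assms(1) by auto
  moreover have "ring_certified n"
    using assms(1) ring_certified_5 ring_certified_6 ring_certified_7 ring_certified_8
      ring_certified_9 ring_certified_11 by auto
  ultimately show ?thesis
    using ring_not_exotic_if_certified[of n "ring_symmetries n"] assms(2)
    by (simp add: ring_certified_def)
qed

end
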